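(* Let $W=\sum_{j\in[n]}p_j\mathrm B(\varepsilon_j)\in\mathbb B_n^*$ and $Q=\sum_{i\in[m]}q_i\mathrm B(\sigma_i)\in\mathbb B_m^*$, with all $p_j,q_i>0$, $\sum_jp_j=\sum_iq_i=1$, $0\le\varepsilon_1<\cdots<\varepsilon_n\le1/2$ and $0\le\sigma_1<\cdots<\sigma_m\le1/2$. If $W\preccurlyeq Q$, then $\varepsilon_1\ge\sigma_1$. If moreover $W$ is a $2n$-P-degradation of $Q$, then $\varepsilon_n\le\sigma_m$.
   Context: A BIDMC $W$ has input uniform on $\{0,1\}$, discrete output alphabet $\mathcal Y$ and transition probabilities $\Pr(y\mid x)$; its LR-profile is $P_W(\varepsilon)=\Pr\big(\mathcal L_W(y)=\varepsilon/(1-\varepsilon)\big)$ with $\mathcal L_W(\hat y)=\Pr(y=\hat y\mid x=0)/\Pr(y=\hat y\mid x=1)$, and $W\cong W'$ if LR-profiles coincide. $W'\preccurlyeq W$ if there is a channel $T$ from the output alphabet of $W$ to that of $W'$ with $\Pr(y'\mid x'=a)=\sum_{y}\Pr(y\mid x=a)T(y'\mid y)$. $\mathrm B(\varepsilon)$ is the BSC with crossover probability $\varepsilon$; $\sum_iq_iW_i$ denotes the random switching channel (use $W_i$ with probability $q_i$ independently of the input and output the index $i$ along with the output). $\mathbb B_n$ is the set of BIDMCs equivalent to $\sum_{i\in[n]}p_i\mathrm B(\varepsilon_i)$ for a probability vector $(p_i)$ and $\varepsilon_i\in[0,1]$; $\mathbb B_n^*=\mathbb B_n\setminus\mathbb B_{n-1}$.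 $P_\epsilon(W)=\frac12\sum_{y}\min\{\Pr(y\mid x=0),\Pr(y\mid x=1)\}$. For a symmetric BIDMC $Q$ and $n\ge1$, $W$ is a $2n$-P-degradation of $Q$ if $W\in\mathbb B_n$, $W\preccurlyeq Q$ and $P_\epsilon(W)=\min\{P_\epsilon(W'):W'\in\mathbb B_n,\ W'\preccurlyeq Q\}$. *)

theory Defs
  imports Main "HOL-Library.Extended_Real"
begin

text \<open>A BIDMC is modelled as W :: nat => nat => real, where W a y = Pr(y | x = a)
  for inputs a in {0,1}; the output alphabet is a finite subset of nat (the support).\<close>

type_synonym channel = "nat \<Rightarrow> nat \<Rightarrow> real"

definition ch_supp :: "channel \<Rightarrow> nat set" where
  "ch_supp W = {y. W 0 y \<noteq> 0 \<or> W 1 y \<noteq> 0}"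

definition is_bidmc :: "channel \<Rightarrow> bool" where
  "is_bidmc W \<longleftrightarrow> (\<forall>a\<in>{0,1}. \<forall>y. W a y \<ge> 0) \<and> finite (ch_supp W)
     \<and> (\<forall>a\<in>{0,1}. (\<Sum>y\<in>ch_supp W. W a y) = 1)"

text \<open>LR-profile: P_W(e) = Pr(L_W(y) = e/(1-e)) under uniform input. The event
  L_W(y) = e/(1-e) (with the usual conventions for 0 and infinity) is exactly
  W 0 y / (W 0 y + W 1 y) = e for outputs of positive probability.\<close>
definition LR_profile :: "channel \<Rightarrow> real \<Rightarrow> real" where
  "LR_profile W e = (\<Sum>y\<in>{y\<in>ch_supp W. W 0 y / (W 0 y + W 1 y) = e}. (W 0 y + W 1 y) / 2)"

definition ch_equiv :: "channel \<Rightarrow> channel \<Rightarrow> bool" where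
  "ch_equiv W W' \<longleftrightarrow> (\<forall>e. LR_profile W e = LR_profile W' e)"

text \<open>degraded W' W  means  W' \<preccurlyeq> W.\<close>
definition degraded :: "channel \<Rightarrow> channel \<Rightarrow> bool" where
  "degraded W' W \<longleftrightarrow> (\<exists>T :: nat \<Rightarrow> nat \<Rightarrow> real.
     (\<forall>y\<in>ch_supp W. (\<forall>y'. T y y' \<ge> 0) \<and> finite {y'. T y y' \<noteq> 0}
                      \<and> (\<Sum>y'\<in>{y'. T y y' \<noteq> 0}. T y y') = 1)
     \<and> (\<forall>a\<in>{0,1}. \<forall>y'. W' a y' = (\<Sum>y\<in>ch_supp W. W a y * T y y')))"

text \<open>Random switching channel sum_{i<n} p_i B(eps_i); output (i,b) encoded as 2*i+b.\<close>
definition bsc_mix :: "nat \<Rightarrow> (nat \<Rightarrow> real) \<Rightarrow> (nat \<Rightarrow> real) \<Rightarrow> channel" where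
  "bsc_mix n p eps = (\<lambda>a y. if y < 2 * n
      then p (y div 2) * (if y mod 2 = a then 1 - eps (y div 2) else eps (y div 2))
      else 0)"

definition prob_vec :: "nat \<Rightarrow> (nat \<Rightarrow> real) \<Rightarrow> bool" where
  "prob_vec n p \<longleftrightarrow> (\<forall>i<n. p i \<ge> 0) \<and> (\<Sum>i<n. p i) = 1"

definition in_B :: "nat \<Rightarrow> channel \<Rightarrow> bool" where
  "in_B n W \<longleftrightarrow> is_bidmc W \<and> (\<exists>p eps. prob_vec n p \<and> (\<forall>i<n. 0 \<le> eps i \<and> eps i \<le> 1)
       \<and> ch_equiv W (bsc_mix n p eps))"

definition in_B_star :: "nat \<Rightarrow> channel \<Rightarrow> bool" where
  "in_B_star n W \<longleftrightarrow> in_B n W \<and> \<not> in_B (n - 1) W"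

definition P_err :: "channel \<Rightarrow> real" where
  "P_err W = (1/2) * (\<Sum>y\<in>ch_supp W. min (W 0 y) (W 1 y))"

definition P_degradation :: "nat \<Rightarrow> channel \<Rightarrow> channel \<Rightarrow> bool" where
  "P_degradation n W Q \<longleftrightarrow> in_B n W \<and> degraded W Q \<and>
     (\<forall>W'. in_B n W' \<and> degraded W' Q \<longrightarrow> P_err W \<le> P_err W')"

end

theory Submission
  imports Defs
begin

(* Both bounds compare posteriors Pr(x = 0 | y) = Q 0 y / (Q 0 y + Q 1 y). A degradation
  mixes the outputs of Q with nonnegative weights, so a lower bound on the posteriors of Q,
  such as sigma_1 for a BSC mixture, passes to the outputs of W; the output 1 of the first
  component of W has posterior eps_1, whence eps_1 >= sigma_1.
  For the second bound, forgetting the component index degrades Q to the single BSC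
  B(sum_i q_i sigma_i), which lies in B_n and has the same error probability as Q, so a
  2n-P-degradation W satisfies P_e(W) <= P_e(Q). Conversely, pushing the mass of Q through
  the kernel shows 2 P_e(W) >= 2 P_e(Q) + p_n (eps_n - sigma_m), because every output of Q
  has smaller posterior at most sigma_m. Together, eps_n <= sigma_m. *)

lemma lift_Suc_mono_le_below:
  fixes f :: "nat \<Rightarrow> 'a::order"
  assumes "\<And>j. Suc j < n \<Longrightarrow> f j \<le> f (Suc j)" and "i \<le> k" and "k < n"
  shows "f i \<le> f k"
  by (rule lift_Suc_mono_le_ivl[of "{j. Suc j < n}"]) (use assms in auto)

lemma sum_lessThan_double:
  fixes f :: "nat \<Rightarrow> 'a::comm_monoid_add"
  shows "(\<Sum>y<2*n. f y) = (\<Sum>j<n. f (2*j) + f (2*j+1))"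
  by (induction n) (simp_all add: algebra_simps)

lemma degradedE:
  assumes "degraded W' Q" and "is_bidmc Q"
  obtains T where "\<And>y y'. y \<in> ch_supp Q \<Longrightarrow> 0 \<le> T y y'"
    and "\<And>y. y \<in> ch_supp Q \<Longrightarrow> (\<Sum>y'\<in>ch_supp W'. T y y') = 1"
    and "\<And>a y'. a \<in> {0,1} \<Longrightarrow> W' a y' = (\<Sum>y\<in>ch_supp Q. Q a y * T y y')"
    and "finite (ch_supp W')"
proof -
  let ?S = "ch_supp Q"
  obtain T where T_stoch: "\<And>y. y \<in> ?S \<Longrightarrow> (\<forall>y'. T y y' \<ge> 0) \<and> finite {y'. T y y' \<noteq> 0}
                      \<and> (\<Sum>y'\<in>{y'. T y y' \<noteq> 0}. T y y') = 1"
    and W'_eq: "\<And>a y'. a \<in> {0,1} \<Longrightarrow> W' a y' = (\<Sum>y\<in>?S. Q a y * T y y')"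
    using assms(1) unfolding degraded_def by blast
  have finS: "finite ?S" and Q_nonneg: "\<And>a y. a \<in> {0,1} \<Longrightarrow> 0 \<le> Q a y"
    using assms(2) unfolding is_bidmc_def by auto
  have T_supp: "{y'. T y y' \<noteq> 0} \<subseteq> ch_supp W'" if y: "y \<in> ?S" for y
  proof
    fix y' assume "y' \<in> {y'. T y y' \<noteq> 0}"
    moreover have "0 \<le> T y y'" using T_stoch[OF y] by blast
    ultimately have T_pos: "0 < T y y'" by simp
    have "Q 0 y \<noteq> 0 \<or> Q 1 y \<noteq> 0" using y unfolding ch_supp_def by simp
    then obtain a where a: "a \<in> {0,1}" "0 < Q a y"
      using Q_nonneg by (metis insert_iff less_eq_real_def)
    have "0 < Q a y * T y y'" using a T_pos by simp
    also have "\<dots> \<le> W' a y'"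
      unfolding W'_eq[OF a(1)] using finS y T_stoch Q_nonneg[OF a(1)]
      by (intro member_le_sum) auto
    finally show "y' \<in> ch_supp W'" using a(1) unfolding ch_supp_def by auto
  qed
  have "ch_supp W' \<subseteq> (\<Union>y\<in>?S. {y'. T y y' \<noteq> 0})"
  proof
    fix y' assume "y' \<in> ch_supp W'"
    then obtain a where "a \<in> {0,1}" "W' a y' \<noteq> 0" unfolding ch_supp_def by auto
    then have "(\<Sum>y\<in>?S. Q a y * T y y') \<noteq> 0" using W'_eq by simp
    then obtain y where "y \<in> ?S" "Q a y * T y y' \<noteq> 0"
      by (meson sum.neutral)
    then show "y' \<in> (\<Union>y\<in>?S. {y'. T y y' \<noteq> 0})" by auto
  qed
  moreover have "finite (\<Union>y\<in>?S. {y'. T y y' \<noteq> 0})"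
    using finS T_stoch by simp
  ultimately have finS': "finite (ch_supp W')"
    by (rule finite_subset)
  have T_sum: "(\<Sum>y'\<in>ch_supp W'. T y y') = 1" if "y \<in> ?S" for y
    using T_stoch[OF that] sum.mono_neutral_left[OF finS' T_supp[OF that], of "T y"] by simp
  show thesis
    by (rule that[OF _ T_sum W'_eq finS']) (use T_stoch in blast)+
qed

lemma degraded_posterior_lower_bound:
  assumes "degraded W' Q" and "is_bidmc Q"
    and Q_bound: "\<And>y. c * (Q 0 y + Q 1 y) \<le> Q 0 y"
  shows "c * (W' 0 y' + W' 1 y') \<le> W' 0 y'"
proof -
  obtain T where T_nonneg: "\<And>y y'. y \<in> ch_supp Q \<Longrightarrow> 0 \<le> T y y'"
    and W'_eq: "\<And>a y'. a \<in> {0,1} \<Longrightarrow> W' a y' = (\<Sum>y\<in>ch_supp Q. Q a y * T y y')"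
    using degradedE[OF assms(1,2)] by metis
  have "W' 0 y' - c * (W' 0 y' + W' 1 y')
        = (\<Sum>y\<in>ch_supp Q. Q 0 y * T y y' - c * (Q 0 y * T y y' + Q 1 y * T y y'))"
    by (simp add: W'_eq sum_subtractf sum.distrib sum_distrib_left distrib_left)
  also have "\<dots> = (\<Sum>y\<in>ch_supp Q. (Q 0 y - c * (Q 0 y + Q 1 y)) * T y y')"
    by (simp add: algebra_simps)
  also have "\<dots> \<ge> 0"
    using Q_bound T_nonneg by (intro sum_nonneg mult_nonneg_nonneg) auto
  finally show ?thesis by simp
qed

lemma P_err_degraded_lower_bound:
  assumes "degraded W' Q" and "is_bidmc Q"
    and Q_bound: "\<And>y. min (Q 0 y) (Q 1 y) \<le> M * (Q 0 y + Q 1 y)"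
    and y0: "y0 \<in> ch_supp W'" and W'_y0: "W' 0 y0 \<le> W' 1 y0"
  shows "2 * P_err Q + (W' 0 y0 - M * (W' 0 y0 + W' 1 y0)) \<le> 2 * P_err W'"
proof -
  (* min is superadditive, and at y0 the minimum of W' is attained by W' 0, which collects
    the whole of Q 0 rather than only min (Q 0) (Q 1). *)
  let ?S = "ch_supp Q" and ?S' = "ch_supp W'"
  define mn where "mn y = min (Q 0 y) (Q 1 y)" for y
  define gain where "gain = W' 0 y0 - M * (W' 0 y0 + W' 1 y0)"
  obtain T where T_nonneg: "\<And>y y'. y \<in> ?S \<Longrightarrow> 0 \<le> T y y'"
    and T_sum: "\<And>y. y \<in> ?S \<Longrightarrow> (\<Sum>y'\<in>?S'. T y y') = 1"
    and W'_eq: "\<And>a y'. a \<in> {0,1} \<Longrightarrow> W' a y' = (\<Sum>y\<in>?S. Q a y * T y y')"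
    and finS': "finite ?S'"
    using degradedE[OF assms(1,2)] by metis
  have below_W': "(\<Sum>y\<in>?S. mn y * T y y') \<le> W' a y'" if "a \<in> {0,1}" for a y'
    unfolding W'_eq[OF that] mn_def using that T_nonneg
    by (intro sum_mono mult_right_mono) auto
  have at_y0: "(\<Sum>y\<in>?S. mn y * T y y0) + gain \<le> W' 0 y0"
  proof -
    have "(\<Sum>y\<in>?S. mn y * T y y0) + gain
          = (\<Sum>y\<in>?S. mn y * T y y0 + (Q 0 y * T y y0 - M * (Q 0 y * T y y0 + Q 1 y * T y y0)))"
      by (simp add: gain_def W'_eq sum_subtractf sum.distrib sum_distrib_left distrib_left)
    also have "\<dots> = (\<Sum>y\<in>?S. (mn y + (Q 0 y - M * (Q 0 y + Q 1 y))) * T y y0)"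
      by (simp add: algebra_simps)
    also have "\<dots> \<le> (\<Sum>y\<in>?S. Q 0 y * T y y0)"
      using Q_bound T_nonneg unfolding mn_def by (intro sum_mono mult_right_mono) auto
    finally show ?thesis by (simp add: W'_eq)
  qed
  have "2 * P_err Q = (\<Sum>y\<in>?S. mn y * (\<Sum>y'\<in>?S'. T y y'))"
    by (simp add: P_err_def mn_def T_sum)
  also have "\<dots> = (\<Sum>y'\<in>?S'. \<Sum>y\<in>?S. mn y * T y y')"
    unfolding sum_distrib_left by (rule sum.swap)
  finally have "2 * P_err Q + gain
      = (\<Sum>y'\<in>?S'. (\<Sum>y\<in>?S. mn y * T y y') + (if y' = y0 then gain else 0))"
    by (simp add: sum.distrib finS' y0)
  also have "\<dots> \<le> (\<Sum>y'\<in>?S'. min (W' 0 y') (W' 1 y'))"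
    using below_W' at_y0 W'_y0 by (intro sum_mono) (auto simp: min_absorb1)
  also have "\<dots> = 2 * P_err W'" by (simp add: P_err_def)
  finally show ?thesis unfolding gain_def .
qed

lemma bsc_mix_even:
  "bsc_mix n p e a (2*j) = (if j < n then p j * (if a = 0 then 1 - e j else e j) else 0)"
  unfolding bsc_mix_def by (cases "a = 0") simp_all

lemma bsc_mix_odd:
  "bsc_mix n p e a (2*j+1) = (if j < n then p j * (if a = 1 then 1 - e j else e j) else 0)"
  unfolding bsc_mix_def by (cases "a = 1") simp_all

lemma ch_supp_bsc_mix: "ch_supp (bsc_mix n p e) \<subseteq> {..<2*n}"
  unfolding ch_supp_def bsc_mix_def by (auto split: if_splits)

lemma sum_ch_supp_bsc_mix:
  assumes "\<And>y. bsc_mix n p e 0 y = 0 \<Longrightarrow> bsc_mix n p e 1 y = 0 \<Longrightarrow> h y = 0"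
  shows "sum h (ch_supp (bsc_mix n p e)) = (\<Sum>y<2*n. h y)"
  by (rule sum.mono_neutral_left) (use ch_supp_bsc_mix assms in \<open>auto simp: ch_supp_def\<close>)

lemma bsc_mix_cases:
  obtains (even) j where "j < n" "bsc_mix n p e 0 y = p j * (1 - e j)" "bsc_mix n p e 1 y = p j * e j"
  | (odd) j where "j < n" "bsc_mix n p e 0 y = p j * e j" "bsc_mix n p e 1 y = p j * (1 - e j)"
  | (outside) "bsc_mix n p e 0 y = 0" "bsc_mix n p e 1 y = 0"
proof (cases "y < 2*n")
  case True
  then have j: "y div 2 < n" by simp
  consider "y mod 2 = 0" | "y mod 2 = 1" by linarith
  then show thesis
    using that(1,2)[OF j] True unfolding bsc_mix_def by cases auto
qed (use that(3) in \<open>simp add: bsc_mix_def\<close>)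

lemma bsc_mix_posterior_lower_bound:
  assumes "\<forall>j<n. 0 \<le> p j" and "\<forall>j<n. c \<le> e j \<and> c \<le> 1 - e j"
  shows "c * (bsc_mix n p e 0 y + bsc_mix n p e 1 y) \<le> bsc_mix n p e 0 y"
proof (cases rule: bsc_mix_cases[of n p e y])
  case (even j)
  then show ?thesis using assms mult_left_mono[of c "1 - e j" "p j"] by (simp add: algebra_simps)
next
  case (odd j)
  then show ?thesis using assms mult_left_mono[of c "e j" "p j"] by (simp add: algebra_simps)
qed simp

lemma bsc_mix_min_le:
  assumes "\<forall>j<n. 0 \<le> p j" and "\<forall>j<n. e j \<le> M"
  shows "min (bsc_mix n p e 0 y) (bsc_mix n p e 1 y) \<le> M * (bsc_mix n p e 0 y + bsc_mix n p e 1 y)"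
proof (cases rule: bsc_mix_cases[of n p e y])
  case (even j)
  then show ?thesis using assms mult_left_mono[of "e j" M "p j"] by (simp add: algebra_simps min_def)
next
  case (odd j)
  then show ?thesis using assms mult_left_mono[of "e j" M "p j"] by (simp add: algebra_simps min_def)
qed simp

lemma P_err_bsc_mix:
  assumes "\<forall>j<n. 0 \<le> p j \<and> e j \<le> 1/2"
  shows "P_err (bsc_mix n p e) = (\<Sum>j<n. p j * e j)"
proof -
  have "min (p j * (1 - e j)) (p j * e j) = p j * e j" if "j < n" for j
  proof (rule min_absorb2)
    show "p j * e j \<le> p j * (1 - e j)" using assms that by (intro mult_left_mono) auto
  qed
  then have "(\<Sum>y<2*n. min (bsc_mix n p e 0 y) (bsc_mix n p e 1 y)) = (\<Sum>j<n. 2 * (p j * e j))"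
    unfolding sum_lessThan_double bsc_mix_even bsc_mix_odd by (intro sum.cong) (auto simp: min.commute)
  then show ?thesis
    unfolding P_err_def by (subst sum_ch_supp_bsc_mix) (auto simp: sum_distrib_left[symmetric])
qed

lemma is_bidmc_bsc_mix:
  assumes "prob_vec n p" and "\<forall>j<n. 0 \<le> e j \<and> e j \<le> 1"
  shows "is_bidmc (bsc_mix n p e)"
  unfolding is_bidmc_def
proof (intro conjI ballI allI)
  fix a y
  show "0 \<le> bsc_mix n p e a y"
    using assms unfolding prob_vec_def bsc_mix_def by (auto simp: less_mult_imp_div_less)
next
  show "finite (ch_supp (bsc_mix n p e))" by (rule finite_subset[OF ch_supp_bsc_mix]) simp
next
  fix a :: nat assume "a \<in> {0,1}"
  then have "(\<Sum>y<2*n. bsc_mix n p e a y) = (\<Sum>j<n. p j)"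
    unfolding sum_lessThan_double bsc_mix_even bsc_mix_odd
    by (intro sum.cong) (auto simp: algebra_simps)
  with \<open>a \<in> {0,1}\<close> assms(1) show "(\<Sum>y\<in>ch_supp (bsc_mix n p e). bsc_mix n p e a y) = 1"
    unfolding prob_vec_def by (subst sum_ch_supp_bsc_mix) auto
qed

lemma in_B_bsc_mix:
  assumes "prob_vec n p" and "\<forall>j<n. 0 \<le> e j \<and> e j \<le> 1"
  shows "in_B n (bsc_mix n p e)"
  using assms is_bidmc_bsc_mix unfolding in_B_def ch_equiv_def by blast

definition bsc :: "real \<Rightarrow> channel" where
  "bsc e = bsc_mix 1 (\<lambda>_. 1) (\<lambda>_. e)"

lemma bsc_eq_bsc_mix:
  assumes "1 \<le> n"
  shows "bsc e = bsc_mix n (\<lambda>j. if j = 0 then 1 else 0) (\<lambda>_. e)"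
  using assms unfolding bsc_def bsc_mix_def by (auto simp: fun_eq_iff)

lemma in_B_bsc:
  assumes "1 \<le> n" and "0 \<le> e" and "e \<le> 1"
  shows "in_B n (bsc e)"
  unfolding bsc_eq_bsc_mix[OF assms(1)]
  by (rule in_B_bsc_mix) (use assms in \<open>auto simp: prob_vec_def\<close>)

lemma P_err_bsc: "e \<le> 1/2 \<Longrightarrow> P_err (bsc e) = e"
  unfolding bsc_def by (subst P_err_bsc_mix) auto

lemma bsc_degraded_bsc_mix:
  assumes "(\<Sum>j<n. p j) = 1"
  shows "degraded (bsc (\<Sum>j<n. p j * e j)) (bsc_mix n p e)"
  unfolding degraded_def
  (* The kernel forgets the component index i of the output 2 i + b and keeps the bit b. *)
proof (intro exI[of _ "\<lambda>y y'. if y' = y mod 2 then 1 else 0"] conjI ballI allI)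
  fix y :: nat
  have T_supp: "{y'. (if y' = y mod 2 then 1 else 0) \<noteq> (0::real)} = {y mod 2}" by auto
  show "finite {y'. (if y' = y mod 2 then 1 else 0) \<noteq> (0::real)}"
    and "(\<Sum>y'\<in>{y'. (if y' = y mod 2 then 1 else 0) \<noteq> (0::real)}. if y' = y mod 2 then 1 else 0) = 1"
    unfolding T_supp by simp_all
  fix y' show "0 \<le> (if y' = y mod 2 then 1 else 0 :: real)" by simp
next
  fix a :: nat and y' assume a: "a \<in> {0,1}"
  have flip: "(\<Sum>j<n. p j * (1 - e j)) = 1 - (\<Sum>j<n. p j * e j)"
    using assms by (simp add: algebra_simps sum_subtractf)
  have "(\<Sum>y\<in>ch_supp (bsc_mix n p e). bsc_mix n p e a y * (if y' = y mod 2 then 1 else 0))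
      = (\<Sum>j<n. bsc_mix n p e a (2*j) * (if y' = 0 then 1 else 0)
                 + bsc_mix n p e a (2*j+1) * (if y' = 1 then 1 else 0))"
    by (subst sum_ch_supp_bsc_mix) (use a in \<open>auto simp: sum_lessThan_double\<close>)
  also have "\<dots> = bsc (\<Sum>j<n. p j * e j) a y'"
    using a flip unfolding bsc_mix_even bsc_mix_odd by (auto simp: bsc_def bsc_mix_def)
  finally show "bsc (\<Sum>j<n. p j * e j) a y'
      = (\<Sum>y\<in>ch_supp (bsc_mix n p e). bsc_mix n p e a y * (if y' = y mod 2 then 1 else 0))" ..
qed

lemma P_degradation_P_err_le:
  assumes "P_degradation n W (bsc_mix m q sig)" and "1 \<le> n" and "prob_vec m q"
    and "\<forall>i<m. 0 \<le> sig i \<and> sig i \<le> 1/2"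
  shows "P_err W \<le> P_err (bsc_mix m q sig)"
proof -
  define s where "s = (\<Sum>i<m. q i * sig i)"
  have "0 \<le> s" unfolding s_def using assms(3,4) by (auto simp: prob_vec_def intro: sum_nonneg)
  have "s \<le> (\<Sum>i<m. q i * (1/2))" unfolding s_def
    using assms(3,4) by (intro sum_mono mult_left_mono) (auto simp: prob_vec_def)
  also have "\<dots> = 1/2" using assms(3) by (simp add: prob_vec_def flip: sum_divide_distrib)
  finally have "s \<le> 1/2" .
  have "in_B n (bsc s)" and "degraded (bsc s) (bsc_mix m q sig)"
    using in_B_bsc[OF assms(2) \<open>0 \<le> s\<close>] \<open>s \<le> 1/2\<close> bsc_degraded_bsc_mix assms(3)
    unfolding s_def prob_vec_def by auto
  then have "P_err W \<le> P_err (bsc s)"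
    using assms(1) unfolding P_degradation_def by blast
  also have "\<dots> = P_err (bsc_mix m q sig)"
    using P_err_bsc[OF \<open>s \<le> 1/2\<close>] P_err_bsc_mix assms(3,4) unfolding s_def prob_vec_def by simp
  finally show ?thesis .
qed

lemma degraded_bsc_mix_crossover_lower_bound:
  assumes "degraded (bsc_mix n p eps) (bsc_mix m q sig)" and "is_bidmc (bsc_mix m q sig)"
    and "\<forall>i<m. 0 \<le> q i" and "\<forall>i<m. c \<le> sig i \<and> c \<le> 1 - sig i"
    and "j < n" and "0 < p j"
  shows "c \<le> eps j"
proof -
  let ?W = "bsc_mix n p eps"
  have "c * (?W 0 (2*j+1) + ?W 1 (2*j+1)) \<le> ?W 0 (2*j+1)"
    by (rule degraded_posterior_lower_bound[OF assms(1,2) bsc_mix_posterior_lower_bound[OF assms(3,4)]])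
  then have "c * p j \<le> eps j * p j"
    using \<open>j < n\<close> unfolding bsc_mix_odd by (simp add: algebra_simps)
  then show ?thesis
    using \<open>0 < p j\<close> by simp
qed

lemma P_degradation_bsc_mix_crossover_upper_bound:
  assumes "P_degradation n (bsc_mix n p eps) (bsc_mix m q sig)" and "is_bidmc (bsc_mix m q sig)"
    and "prob_vec m q" and "\<forall>i<m. 0 \<le> sig i \<and> sig i \<le> 1/2" and "\<forall>i<m. sig i \<le> M"
    and "j < n" and "0 < p j" and "eps j \<le> 1/2"
  shows "eps j \<le> M"
proof -
  let ?W = "bsc_mix n p eps" and ?Q = "bsc_mix m q sig" and ?y0 = "2*j+1"
  have W_y0: "?W 0 ?y0 = p j * eps j" "?W 1 ?y0 = p j * (1 - eps j)"
    using \<open>j < n\<close> unfolding bsc_mix_odd by simp_all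
  have "?W 0 ?y0 \<le> ?W 1 ?y0"
    unfolding W_y0 using assms(7,8) by (intro mult_left_mono) auto
  moreover have "?y0 \<in> ch_supp ?W"
    using W_y0 assms(7,8) by (simp add: ch_supp_def)
  moreover have "degraded ?W ?Q" and "P_err ?W \<le> P_err ?Q"
    using assms(1) P_degradation_P_err_le[OF assms(1) _ assms(3,4)] \<open>j < n\<close>
    unfolding P_degradation_def by auto
  moreover have "\<forall>i<m. 0 \<le> q i" using assms(3) by (simp add: prob_vec_def)
  ultimately have "2 * P_err ?Q + (?W 0 ?y0 - M * (?W 0 ?y0 + ?W 1 ?y0)) \<le> 2 * P_err ?Q"
    using P_err_degraded_lower_bound[OF _ assms(2) bsc_mix_min_le] assms(5) by fastforce
  then have "p j * (eps j - M) \<le> 0"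
    unfolding W_y0 by (simp add: algebra_simps)
  then show ?thesis
    using \<open>0 < p j\<close> by (simp add: mult_le_0_iff)
qed

theorem lemma4:
  fixes n m :: nat and p eps q sig :: "nat \<Rightarrow> real" and W Q :: channel
  assumes "n \<ge> 1" and "m \<ge> 1"
    and W_def: "W = bsc_mix n p eps" and Q_def: "Q = bsc_mix m q sig"
    and "in_B_star n W" and "in_B_star m Q"
    and "\<forall>j<n. p j > 0" and "(\<Sum>j<n. p j) = 1"
    and "\<forall>i<m. q i > 0" and "(\<Sum>i<m. q i) = 1"
    and "0 \<le> eps 0" and "\<forall>j. Suc j < n \<longrightarrow> eps j < eps (Suc j)" and "eps (n - 1) \<le> 1/2"
    and "0 \<le> sig 0" and "\<forall>i. Suc i < m \<longrightarrow> sig i < sig (Suc i)" and "sig (m - 1) \<le> 1/2"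
  shows "(degraded W Q \<longrightarrow> eps 0 \<ge> sig 0)
       \<and> (P_degradation n W Q \<longrightarrow> eps (n - 1) \<le> sig (m - 1))"
proof -
  have Q_bidmc: "is_bidmc (bsc_mix m q sig)"
    using assms(6) unfolding Q_def in_B_star_def in_B_def by blast
  have q_prob: "prob_vec m q" using assms(9,10) by (simp add: prob_vec_def less_imp_le)
  have sig_bounds: "sig 0 \<le> sig i \<and> sig i \<le> sig (m - 1)" if "i < m" for i
    using lift_Suc_mono_le_below[of m sig] assms(15) that by (simp add: less_imp_le)
  have "degraded W Q \<longrightarrow> sig 0 \<le> eps 0"
    using degraded_bsc_mix_crossover_lower_bound[OF _ Q_bidmc, of n p eps "sig 0" 0]
      q_prob sig_bounds assms(1,7,16) unfolding W_def Q_def prob_vec_def by fastforce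
  moreover have "P_degradation n W Q \<longrightarrow> eps (n - 1) \<le> sig (m - 1)"
    using P_degradation_bsc_mix_crossover_upper_bound[OF _ Q_bidmc q_prob, of n p eps "sig (m - 1)" "n - 1"]
      sig_bounds assms(1,7,13,14,16) unfolding W_def Q_def by fastforce
  ultimately show ?thesis by blast
qed

end
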